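(* For $t=3$ topics, $r_3 = \frac{5}{6}$.
   Context: Let $t$ be a positive integer (the number of topics). A voter matrix with $t$ topics is a matrix $V\in\{Y,N\}^{n\times t}$ for some positive integer $n$ (rows are voters), subject to the standing assumption that in every column the number of entries $Y$ is at least the number of entries $N$. $\mathcal{V}_t$ is the set of all voter matrices with $t$ topics and any number of voters. A proposal is a vector $p\in\{Y,N\}^t$. A voter $v$ supports $p$ if the Hamming distance between $v$ and $p$ is at most $t/2$; $p$ is supported by $V$ if at least $n/2$ rows of $V$ support $p$. For $i=1,\dots,t$ let $m_i$ be the fraction of entries $Y$ in column $i$ of $V$, and $m_V=\frac1t\sum_i m_i$. For a proposal $p$ let $m_i'=m_i$ if $p_i=Y$ and $m_i'=1-m_i$ if $p_i=N$; set $R_p=\frac1t\sum_i m_i'$ and $r_p=R_p/m_V$. Let $r_V=\max r_p$, the maximum over all proposals $p$ supported by $V$, and $r_t=\inf_{V\in\mathcal{V}_t} r_V$. *)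

theory Defs
  imports Complex_Main
begin

text \<open>A voter is a row: a list of booleans of length t (True = Y, False = N).\<close>

definition voter_matrix :: "nat \<Rightarrow> bool list list \<Rightarrow> bool" where
  "voter_matrix t V \<longleftrightarrow> t > 0 \<and> V \<noteq> [] \<and> (\<forall>v\<in>set V. length v = t) \<and>
     (\<forall>j<t. length (filter (\<lambda>v. \<not> v ! j) V) \<le> length (filter (\<lambda>v. v ! j) V))"

definition hamming :: "nat \<Rightarrow> bool list \<Rightarrow> bool list \<Rightarrow> nat" where
  "hamming t v p = card {j. j < t \<and> v ! j \<noteq> p ! j}"

definition supports :: "nat \<Rightarrow> bool list \<Rightarrow> bool list \<Rightarrow> bool" where
  "supports t v p \<longleftrightarrow> real (hamming t v p) \<le> real t / 2"

definition supported :: "nat \<Rightarrow> bool list list \<Rightarrow> bool list \<Rightarrow> bool" where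
  "supported t V p \<longleftrightarrow> real (length (filter (\<lambda>v. supports t v p) V)) \<ge> real (length V) / 2"

definition frac_Y :: "bool list list \<Rightarrow> nat \<Rightarrow> real" where
  "frac_Y V j = real (length (filter (\<lambda>v. v ! j) V)) / real (length V)"

definition m_V :: "nat \<Rightarrow> bool list list \<Rightarrow> real" where
  "m_V t V = (\<Sum>j<t. frac_Y V j) / real t"

definition R_p :: "nat \<Rightarrow> bool list list \<Rightarrow> bool list \<Rightarrow> real" where
  "R_p t V p = (\<Sum>j<t. if p ! j then frac_Y V j else 1 - frac_Y V j) / real t"

definition r_p :: "nat \<Rightarrow> bool list list \<Rightarrow> bool list \<Rightarrow> real" where
  "r_p t V p = R_p t V p / m_V t V"

definition r_V :: "nat \<Rightarrow> bool list list \<Rightarrow> real" where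
  "r_V t V = Max {r_p t V p | p. length p = t \<and> supported t V p}"

definition r_t :: "nat \<Rightarrow> real" where
  "r_t t = Inf {r_V t V | V. voter_matrix t V}"

end

theory Submission
  imports Defs "HOL-Real_Asymp.Real_Asymp"
begin

(* Write m for the number of voters and n_j for the number of N entries in column j; their sum s
   is the total Hamming distance of the voters from the all-Y proposal.  If all-Y is supported,
   its ratio is 1.  Otherwise more than m/2 voters are at distance at least 2 from it, so s > m.
   Counting voter by voter, s = n_j + (opponents of the proposal whose only N is at j)
   + (opponents of all-Y); since the other two columns contribute at most m, each such single-N
   proposal is supported.  For n_j maximal, 12 n_j >= 4 s >= 3 m + s, which is exactly the
   ratio bound 5/6.

   For the upper bound, 3k-3 unanimous voters together with k+1 voters approving each single
   topic leave all-Y as the only proposal with ratio above 5/6 + 1/(4k-2), and all-Y is not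
   supported. *)

lemma hamming_eq_sum: "hamming t v p = (\<Sum>j<t. of_bool (v ! j \<noteq> p ! j))"
  by (simp add: hamming_def Int_def conj_commute)

lemma supports_iff: "supports t v p \<longleftrightarrow> 2 * hamming t v p \<le> t"
  unfolding supports_def by linarith

lemma length_filter_eq_sum_list: "length (filter P xs) = (\<Sum>x\<leftarrow>xs. of_bool (P x))"
  by (induction xs) auto

lemma sum_list_sum_swap: "(\<Sum>x\<leftarrow>xs. \<Sum>i\<in>I. f x i) = (\<Sum>i\<in>I. \<Sum>x\<leftarrow>xs. f x i)"
  by (induction xs) (simp_all add: sum.distrib)

lemma ex_max_lessThan:
  fixes f :: "nat \<Rightarrow> 'a::linorder"
  assumes "0 < t"
  shows "\<exists>j<t. \<forall>i<t. f i \<le> f j"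
proof -
  have "Max (f ` {..<t}) \<in> f ` {..<t}"
    using assms by (intro Max_in) auto
  then obtain j where "j < t" "f j = Max (f ` {..<t})"
    by (metis imageE lessThan_iff)
  then show ?thesis
    by auto
qed

definition opponents :: "nat \<Rightarrow> bool list list \<Rightarrow> bool list \<Rightarrow> nat" where
  "opponents t V p = length (filter (\<lambda>v. \<not> supports t v p) V)"

lemma supported_iff_opponents: "supported t V p \<longleftrightarrow> 2 * opponents t V p \<le> length V"
  using sum_length_filter_compl[of "\<lambda>v. supports t v p" V]
  unfolding supported_def opponents_def by linarith

lemma opponents_le_sum_hamming:
  "(t div 2 + 1) * opponents t V p \<le> (\<Sum>v\<leftarrow>V. hamming t v p)"
proof -
  have "(t div 2 + 1) * of_bool (\<not> supports t v p) \<le> hamming t v p" for v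
    by (auto simp: supports_iff)
  then show ?thesis
    unfolding opponents_def length_filter_eq_sum_list sum_list_const_mult[symmetric]
    by (rule sum_list_mono)
qed

definition yeas :: "bool list list \<Rightarrow> nat \<Rightarrow> nat" where
  "yeas V j = length (filter (\<lambda>v. v ! j) V)"

definition nays :: "bool list list \<Rightarrow> nat \<Rightarrow> nat" where
  "nays V j = length (filter (\<lambda>v. \<not> v ! j) V)"

lemma yeas_add_nays: "yeas V j + nays V j = length V"
  by (simp add: yeas_def nays_def sum_length_filter_compl)

lemma sum_yeas_add_sum_nays: "(\<Sum>j<t. yeas V j) + (\<Sum>j<t. nays V j) = t * length V"
  by (simp flip: sum.distrib add: yeas_add_nays)

lemma voter_matrix_nays_le:
  assumes "voter_matrix t V" "j < t"
  shows "2 * nays V j \<le> length V"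
  using assms yeas_add_nays[of V j] unfolding voter_matrix_def yeas_def nays_def by fastforce

lemma voter_matrix_sum_nays_le:
  assumes "voter_matrix t V" "j < t"
  shows "2 * (\<Sum>i<t. nays V i) \<le> 2 * nays V j + (t - 1) * length V"
proof -
  have "(\<Sum>i\<in>{..<t} - {j}. 2 * nays V i) \<le> card ({..<t} - {j}) * length V"
    using sum_bounded_above[of "{..<t} - {j}" "\<lambda>i. 2 * nays V i" "length V"]
      voter_matrix_nays_le[OF assms(1)] by simp
  then show ?thesis
    using assms(2) by (simp add: sum.remove[of _ j] flip: sum_distrib_left)
qed

lemma sum_nays_eq_sum_hamming:
  "(\<Sum>j<t. nays V j) = (\<Sum>v\<leftarrow>V. hamming t v (replicate t True))"
proof -
  have "hamming t v (replicate t True) = (\<Sum>j<t. of_bool (\<not> v ! j))" for v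
    by (auto simp: hamming_eq_sum simp del: sum_of_bool_eq intro!: sum.cong)
  then show ?thesis
    by (simp add: nays_def length_filter_eq_sum_list sum_list_sum_swap del: sum_of_bool_eq)
qed

lemma r_p_eq_yeas_nays:
  assumes "V \<noteq> []"
  shows "r_p t V p =
    (\<Sum>j<t. if p ! j then real (yeas V j) else real (nays V j)) / (\<Sum>j<t. real (yeas V j))"
proof -
  define N where "N = real (length V)"
  have "N > 0" using assms by (simp add: N_def)
  have frac: "frac_Y V j = yeas V j / N" for j
    by (simp add: frac_Y_def yeas_def N_def)
  have "(if p ! j then frac_Y V j else 1 - frac_Y V j)
      = (if p ! j then real (yeas V j) else real (nays V j)) / N" for j
  proof -
    have "real (yeas V j) + real (nays V j) = N"
      unfolding N_def yeas_add_nays[of V j, symmetric] by simp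
    then show ?thesis using \<open>N > 0\<close> by (auto simp: frac field_simps)
  qed
  then have "R_p t V p = (\<Sum>j<t. if p ! j then real (yeas V j) else real (nays V j)) / N / t"
    by (simp add: R_p_def sum_divide_distrib)
  moreover have "m_V t V = (\<Sum>j<t. real (yeas V j)) / N / t"
    by (simp add: m_V_def frac sum_divide_distrib)
  ultimately show ?thesis
    using \<open>N > 0\<close> by (cases "t = 0") (simp_all add: r_p_def)
qed

lemma r_p_all_yes:
  assumes "voter_matrix t V"
  shows "r_p t V (replicate t True) = 1"
proof -
  have "t > 0" "length V > 0"
    using assms by (auto simp: voter_matrix_def)
  then have "yeas V 0 > 0"
    using voter_matrix_nays_le[OF assms, of 0] yeas_add_nays[of V 0] by linarith
  then have "(\<Sum>j<t. real (yeas V j)) > 0"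
    using \<open>t > 0\<close> by (intro sum_pos2[of _ 0]) auto
  then show ?thesis
    using assms by (simp add: r_p_eq_yeas_nays voter_matrix_def)
qed

lemma sum_if_replicate_update_False:
  fixes f g :: "nat \<Rightarrow> 'a::ab_group_add"
  assumes "j < t"
  shows "(\<Sum>i<t. if ((replicate t True)[j := False]) ! i then f i else g i)
    = (\<Sum>i<t. f i) - f j + g j"
proof -
  have "(\<Sum>i<t. if ((replicate t True)[j := False]) ! i then f i else g i)
      = g j + (\<Sum>i\<in>{..<t} - {j}. f i)"
    using assms by (simp add: sum.remove[of _ j] nth_list_update)
  also have "\<dots> = (\<Sum>i<t. f i) - f j + g j"
    using assms by (simp add: sum_diff1)
  finally show ?thesis .
qed

lemma hamming_all_yes_split:
  assumes "length v = 3" "j < 3"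
  shows "hamming 3 v (replicate 3 True) = of_bool (\<not> v ! j)
    + of_bool (\<not> supports 3 v ((replicate 3 True)[j := False]))
    + of_bool (\<not> supports 3 v (replicate 3 True))"
proof -
  obtain a b c where "v = [a, b, c]"
    using assms(1) by (auto simp: numeral_3_eq_3 length_Suc_conv)
  moreover have "j = 0 \<or> j = 1 \<or> j = 2" using assms(2) by auto
  ultimately show ?thesis
    by (auto simp: supports_iff hamming_eq_sum numeral_3_eq_3 lessThan_Suc simp del: sum_of_bool_eq)
qed

lemma sum_nays_split:
  assumes "\<forall>v\<in>set V. length v = 3" "j < 3"
  shows "(\<Sum>i<3. nays V i) = nays V j + opponents 3 V ((replicate 3 True)[j := False])
    + opponents 3 V (replicate 3 True)"
proof -
  have "(\<Sum>v\<leftarrow>V. hamming 3 v (replicate 3 True))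
      = (\<Sum>v\<leftarrow>V. of_bool (\<not> v ! j) + of_bool (\<not> supports 3 v ((replicate 3 True)[j := False]))
                   + of_bool (\<not> supports 3 v (replicate 3 True)))"
    using assms hamming_all_yes_split by (auto intro!: arg_cong[where f = sum_list])
  then show ?thesis
    unfolding sum_nays_eq_sum_hamming
    by (simp add: nays_def opponents_def length_filter_eq_sum_list sum_list_addf)
qed

lemma single_nay_supported:
  assumes V: "voter_matrix 3 V" and "\<not> supported 3 V (replicate 3 True)" and "j < 3"
  shows "supported 3 V ((replicate 3 True)[j := False])"
proof -
  have "(\<Sum>i<3. nays V i) = nays V j + opponents 3 V ((replicate 3 True)[j := False])
      + opponents 3 V (replicate 3 True)"
    using V \<open>j < 3\<close> by (intro sum_nays_split) (auto simp: voter_matrix_def)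
  moreover have "2 * (\<Sum>i<3. nays V i) \<le> 2 * nays V j + 2 * length V"
    using voter_matrix_sum_nays_le[OF V \<open>j < 3\<close>] by simp
  moreover have "length V < 2 * opponents 3 V (replicate 3 True)"
    using assms(2) by (simp add: supported_iff_opponents)
  ultimately show ?thesis
    by (simp add: supported_iff_opponents)
qed

lemma r_p_single_nay:
  assumes "voter_matrix t V" "j < t"
  shows "r_p t V ((replicate t True)[j := False])
    = ((\<Sum>i<t. real (yeas V i)) - yeas V j + nays V j) / (\<Sum>i<t. real (yeas V i))"
  using assms by (simp add: r_p_eq_yeas_nays sum_if_replicate_update_False voter_matrix_def)

lemma exists_supported_r_p_ge:
  assumes V: "voter_matrix 3 V"
  shows "\<exists>p. length p = 3 \<and> supported 3 V p \<and> 5/6 \<le> r_p 3 V p"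
proof (cases "supported 3 V (replicate 3 True)")
  case True
  then show ?thesis
    using r_p_all_yes[OF V] by (intro exI[of _ "replicate 3 True"]) auto
next
  case False
  obtain j where "j < 3" and j_max: "\<forall>i<3. nays V i \<le> nays V j"
    using ex_max_lessThan[of 3 "nays V"] by auto
  define Y where "Y = (\<Sum>i<3. yeas V i)"
  define s where "s = (\<Sum>i<3. nays V i)"
  have "length V < s"
    using False opponents_le_sum_hamming[of 3 V "replicate 3 True"]
    by (simp add: supported_iff_opponents s_def sum_nays_eq_sum_hamming)
  moreover have "s \<le> 3 * nays V j"
    using sum_bounded_above[of "{..<3}" "nays V"] j_max by (simp add: s_def)
  moreover have "Y + s = 3 * length V"
    using sum_yeas_add_sum_nays by (simp add: Y_def s_def)
  moreover have "2 * nays V j \<le> length V"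
    using voter_matrix_nays_le[OF V \<open>j < 3\<close>] .
  ultimately have "Y > 0" and "6 * yeas V j \<le> Y + 6 * nays V j"
    using yeas_add_nays[of V j] by linarith+
  then have "5/6 \<le> (real Y - yeas V j + nays V j) / Y"
    using of_nat_mono[where 'a = real] by (fastforce simp: field_simps)
  then have "5/6 \<le> r_p 3 V ((replicate 3 True)[j := False])"
    using r_p_single_nay[OF V \<open>j < 3\<close>] by (simp add: Y_def)
  with single_nay_supported[OF V False \<open>j < 3\<close>] show ?thesis
    by (intro exI[of _ "(replicate 3 True)[j := False]"]) simp
qed

lemma finite_supported_r_p: "finite {r_p t V p | p. length p = t \<and> supported t V p}"
proof -
  have "finite (r_p t V ` {p :: bool list. length p = t})"
    using finite_lists_length_eq[of "UNIV :: bool set" t] by simp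
  then show ?thesis
    by (rule finite_subset[rotated]) auto
qed

lemma r_p_le_r_V:
  assumes "length p = t" "supported t V p"
  shows "r_p t V p \<le> r_V t V"
  unfolding r_V_def using assms by (intro Max_ge[OF finite_supported_r_p]) auto

lemma r_V_le:
  assumes "length p = t" "supported t V p"
    and "\<And>q. length q = t \<Longrightarrow> supported t V q \<Longrightarrow> r_p t V q \<le> b"
  shows "r_V t V \<le> b"
  unfolding r_V_def using assms by (intro Max.boundedI[OF finite_supported_r_p]) auto

lemma five_sixths_le_r_V: "voter_matrix 3 V \<Longrightarrow> 5/6 \<le> r_V 3 V"
  using exists_supported_r_p_ge r_p_le_r_V by fastforce

definition tight_matrix :: "nat \<Rightarrow> bool list list" where
  "tight_matrix k = replicate (3 * k - 3) [True, True, True] @ replicate (k + 1) [True, False, False]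
     @ replicate (k + 1) [False, True, False] @ replicate (k + 1) [False, False, True]"

lemma length_tight_matrix: "1 \<le> k \<Longrightarrow> length (tight_matrix k) = 6 * k"
  by (simp add: tight_matrix_def)

lemma yeas_nays_tight_matrix:
  assumes "1 \<le> k" "j < 3"
  shows "yeas (tight_matrix k) j = 4 * k - 2" "nays (tight_matrix k) j = 2 * k + 2"
proof -
  have "j = 0 \<or> j = 1 \<or> j = 2" using assms(2) by auto
  then show "yeas (tight_matrix k) j = 4 * k - 2" "nays (tight_matrix k) j = 2 * k + 2"
    using assms(1) by (auto simp: tight_matrix_def yeas_def nays_def filter_replicate)
qed

lemma voter_matrix_tight_matrix: "2 \<le> k \<Longrightarrow> voter_matrix 3 (tight_matrix k)"
  using yeas_nays_tight_matrix[of k]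
  by (auto simp: voter_matrix_def yeas_def nays_def tight_matrix_def)

lemma all_yes_not_supported_tight_matrix:
  assumes "1 \<le> k"
  shows "\<not> supported 3 (tight_matrix k) (replicate 3 True)"
proof -
  have "opponents 3 (tight_matrix k) (replicate 3 True) = 3 * k + 3"
    by (simp add: opponents_def tight_matrix_def filter_replicate supports_iff hamming_eq_sum
        numeral_3_eq_3 lessThan_Suc)
  then show ?thesis
    using assms by (simp add: supported_iff_opponents length_tight_matrix)
qed

lemma r_p_tight_matrix_le:
  assumes "2 \<le> k" "length p = 3" "p \<noteq> replicate 3 True"
  shows "r_p 3 (tight_matrix k) p \<le> 5/6 + 1 / (4 * real k - 2)"
proof -
  have yeas_nays: "real (yeas (tight_matrix k) j) = 4 * real k - 2"
    "real (nays (tight_matrix k) j) = 2 * real k + 2" if "j < 3" for j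
    using assms(1) yeas_nays_tight_matrix[OF _ that, of k] by (simp_all add: of_nat_diff)
  have "tight_matrix k \<noteq> []"
    using assms(1) length_tight_matrix[of k] by auto
  then have "r_p 3 (tight_matrix k) p
      = (\<Sum>j<3. if p ! j then 4 * real k - 2 else 2 * real k + 2) / (12 * real k - 6)"
    by (auto simp: r_p_eq_yeas_nays yeas_nays intro!: arg_cong2[where f = "(/)"] sum.cong)
  also have "\<dots> \<le> (10 * real k - 2) / (12 * real k - 6)"
  proof (rule divide_right_mono)
    obtain a b c where "p = [a, b, c]"
      using assms(2) by (auto simp: numeral_3_eq_3 length_Suc_conv)
    then show "(\<Sum>j<3. if p ! j then 4 * real k - 2 else 2 * real k + 2) \<le> 10 * real k - 2"
      using assms(1,3) by (auto simp: numeral_3_eq_3 lessThan_Suc)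
  qed (use assms(1) in simp)
  also have "\<dots> = 5/6 + 1 / (4 * real k - 2)"
    using assms(1) by (simp add: field_simps)
  finally show ?thesis .
qed

lemma r_V_tight_matrix_le:
  assumes "2 \<le> k"
  shows "r_V 3 (tight_matrix k) \<le> 5/6 + 1 / (4 * real k - 2)"
proof -
  obtain p where p: "length p = 3" "supported 3 (tight_matrix k) p"
    using exists_supported_r_p_ge[OF voter_matrix_tight_matrix[OF assms]] by blast
  show ?thesis
  proof (rule r_V_le[OF p])
    fix q
    assume "length q = 3" "supported 3 (tight_matrix k) q"
    moreover from this have "q \<noteq> replicate 3 True"
      using all_yes_not_supported_tight_matrix assms by auto
    ultimately show "r_p 3 (tight_matrix k) q \<le> 5/6 + 1 / (4 * real k - 2)"
      using r_p_tight_matrix_le assms by blast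
  qed
qed

theorem theorem5p5:
  shows "r_t 3 = 5 / 6"
  unfolding r_t_def
proof (rule cInf_eq_non_empty)
  show "{r_V 3 V |V. voter_matrix 3 V} \<noteq> {}"
    using voter_matrix_tight_matrix[of 2] by auto
  show "\<And>x. x \<in> {r_V 3 V |V. voter_matrix 3 V} \<Longrightarrow> 5/6 \<le> x"
    using five_sixths_le_r_V by auto
  fix y
  assume y: "\<And>x. x \<in> {r_V 3 V |V. voter_matrix 3 V} \<Longrightarrow> y \<le> x"
  have "y \<le> 5/6 + 1 / (4 * real k - 2)" if "2 \<le> k" for k
    using y[of "r_V 3 (tight_matrix k)"] voter_matrix_tight_matrix[OF that] r_V_tight_matrix_le[OF that]
    by force
  moreover have "(\<lambda>k. 5/6 + 1 / (4 * real k - 2)) \<longlonglongrightarrow> 5/6"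
    by real_asymp
  ultimately show "y \<le> 5/6"
    by (intro LIMSEQ_le_const[of _ "5/6"]) auto
qed

end
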